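(* Let $m>1$, $\chi>0$, $\alpha\in\mathbb R$, and let $p\ge2$ be an integer. (i) If $\chi<C_p$ and $\alpha\le0$, then $\mathcal F^p_{m,\alpha}$ has no critical point in $\mathcal R^p$. (ii) If $\chi=C_p$ and $\alpha<0$, then $\mathcal F^p_{m,\alpha}$ has no critical point in $\mathcal R^p$. (iii) If $\chi>C_p$, then any critical point $V\in\mathcal R^p$ of $\mathcal F^p_{m,\alpha}$ satisfies $\mathcal F^p_m(V)=\frac{2}{m-1}\alpha\,\frac{|V|^2}{2}$; in particular $\mathcal F^p_m(V)$ has the same sign as $\alpha$.
   Context: $\mathcal R^p=\{X\in\mathbb R^p: X_1<\dots<X_p,\ \sum_iX_i=0\}$. $\mathcal F^p_{m,\alpha}(X)=\frac1{m-1}\sum_{i=1}^{p-1}(X_{i+1}-X_i)^{1-m}-\frac{\chi}{m-1}\sum_{1\le i\ne j\le p}|X_i-X_j|^{1-m}+\alpha\frac{|X|^2}{2}$, $\mathcal F^p_m=\mathcal F^p_{m,0}$. $C_p$ is defined by $\frac1{C_p}=\max_{X\in\mathcal R^p}\frac{\sum_{1\le i\ne j\le p}|X_j-X_i|^{1-m}}{\sum_{i=1}^{p-1}(X_{i+1}-X_i)^{1-m}}$. A critical point is a point of $\mathcal R^p$ where the Euclidean gradient of the functional on $\mathbb R^p$ vanishes. *)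

theory Defs
  imports "HOL-Analysis.Analysis"
begin

text \<open>Points of R^p are represented as functions X :: nat => real, where only the
coordinates X 0, ..., X (p-1) matter (paper's X_1,...,X_p shifted by one).\<close>

definition region :: "nat \<Rightarrow> (nat \<Rightarrow> real) \<Rightarrow> bool" where
  "region p X \<longleftrightarrow> (\<forall>i. i + 1 < p \<longrightarrow> X i < X (i + 1)) \<and> (\<Sum>i<p. X i) = 0"

definition sqnorm :: "nat \<Rightarrow> (nat \<Rightarrow> real) \<Rightarrow> real" where
  "sqnorm p X = (\<Sum>i<p. (X i)\<^sup>2)"

definition consec_sum :: "real \<Rightarrow> nat \<Rightarrow> (nat \<Rightarrow> real) \<Rightarrow> real" where
  "consec_sum m p X = (\<Sum>i<p - 1. (X (i + 1) - X i) powr (1 - m))"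

definition pair_sum :: "real \<Rightarrow> nat \<Rightarrow> (nat \<Rightarrow> real) \<Rightarrow> real" where
  "pair_sum m p X = (\<Sum>i<p. \<Sum>j<p. if i \<noteq> j then \<bar>X i - X j\<bar> powr (1 - m) else 0)"

definition Fma :: "real \<Rightarrow> real \<Rightarrow> real \<Rightarrow> nat \<Rightarrow> (nat \<Rightarrow> real) \<Rightarrow> real" where
  "Fma m chi alpha p X =
     1 / (m - 1) * consec_sum m p X - chi / (m - 1) * pair_sum m p X + alpha * sqnorm p X / 2"

text \<open>C_p, defined by 1/C_p = max over R^p of pair_sum / consec_sum (max written as Sup).\<close>
definition Cp :: "real \<Rightarrow> nat \<Rightarrow> real" where
  "Cp m p = 1 / (SUP X\<in>{X. region p X}. pair_sum m p X / consec_sum m p X)"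

definition critical :: "real \<Rightarrow> real \<Rightarrow> real \<Rightarrow> nat \<Rightarrow> (nat \<Rightarrow> real) \<Rightarrow> bool" where
  "critical m chi alpha p X \<longleftrightarrow> region p X \<and>
     (\<forall>i<p. ((\<lambda>t. Fma m chi alpha p (X(i := t))) has_real_derivative 0) (at (X i)))"

end

theory Submission imports Defs begin

text \<open>The three building blocks of the functional are homogeneous: the two interaction
sums of degree \<open>1 - m\<close> and \<open>|X|\<^sup>2\<close> of degree 2. Euler's relation
\<open>\<Sum>\<^sub>i V\<^sub>i \<partial>\<^sub>i F(V) = 0\<close> at a critical point \<open>V\<close> therefore gives
\<open>consec_sum V - \<chi> pair_sum V = \<alpha> |V|\<^sup>2\<close>. By the definition of \<open>C\<^sub>p\<close> the left-hand side is at
least \<open>(C\<^sub>p - \<chi>) pair_sum V\<close>, and both sums are positive, which settles (i) and (ii);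
in case (iii) dividing the relation by \<open>m - 1\<close> is the claimed formula for \<open>F\<^sup>p\<^sub>m(V)\<close>.\<close>

lemma region_strict_mono:
  assumes "region p X" "a < b" "b < p"
  shows "X a < X b"
  using assms(2,3)
proof (induction b)
  case 0
  then show ?case by simp
next
  case (Suc b)
  have "X b < X (Suc b)"
    using assms(1) Suc.prems unfolding region_def by auto
  with Suc show ?case
    by (cases "a = b") auto
qed

lemma region_consecutive_less:
  assumes "region p X" "k + 1 < p"
  shows "X k < X (k + 1)"
  using assms unfolding region_def by blast

lemma region_inj:
  assumes "region p X" "a < p" "b < p" "a \<noteq> b"
  shows "X a \<noteq> X b"
  using region_strict_mono[OF assms(1)] assms(2-4) by (metis less_irrefl nat_neq_iff)

lemma has_real_derivative_abs_powr:
  fixes u r :: real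
  assumes "u \<noteq> 0"
  shows "((\<lambda>x. \<bar>x\<bar> powr r) has_real_derivative r * \<bar>u\<bar> powr r / u) (at u)"
proof (cases "u > 0")
  case True
  have "eventually (\<lambda>x. \<bar>x\<bar> powr r = x powr r) (nhds u)"
    using eventually_nhds_in_open[of "{0<..}" u] True by (auto elim!: eventually_mono)
  moreover have "((\<lambda>x. x powr r) has_real_derivative r * \<bar>u\<bar> powr r / u) (at u)"
    using has_real_derivative_powr[OF True, of r] True by (simp add: powr_diff)
  ultimately show ?thesis
    by (subst DERIV_cong_ev[OF refl _ refl]) auto
next
  case False
  with assms have neg: "u < 0" by simp
  have "eventually (\<lambda>x. \<bar>x\<bar> powr r = (- x) powr r) (nhds u)"
    using eventually_nhds_in_open[of "{..<0}" u] neg by (auto elim!: eventually_mono)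
  moreover have "((\<lambda>x. (- x) powr r) has_real_derivative r * \<bar>u\<bar> powr r / u) (at u)"
    using neg by (auto intro!: derivative_eq_intros simp: powr_diff field_simps)
  ultimately show ?thesis
    by (subst DERIV_cong_ev[OF refl _ refl]) auto
qed

lemma powr_euler_relation:
  fixes u r :: real
  assumes "u > 0"
  shows "u * (r * u powr (r - 1)) = r * u powr r"
  using assms by (simp add: powr_diff)

definition partially_differentiable :: "nat \<Rightarrow> ((nat \<Rightarrow> real) \<Rightarrow> real) \<Rightarrow> (nat \<Rightarrow> real) \<Rightarrow> bool" where
  "partially_differentiable p f X \<longleftrightarrow> (\<forall>i<p. (\<lambda>t. f (X(i := t))) differentiable (at (X i)))"

definition euler_sum :: "nat \<Rightarrow> ((nat \<Rightarrow> real) \<Rightarrow> real) \<Rightarrow> (nat \<Rightarrow> real) \<Rightarrow> real" where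
  "euler_sum p f X = (\<Sum>i<p. X i * deriv (\<lambda>t. f (X(i := t))) (X i))"

lemma partially_differentiable_lincomb:
  assumes "partially_differentiable p f X" "partially_differentiable p g X"
  shows "partially_differentiable p (\<lambda>Y. c * f Y + d * g Y) X"
  using assms unfolding partially_differentiable_def
  by (auto intro!: differentiable_add differentiable_mult)

lemma euler_sum_lincomb:
  assumes "partially_differentiable p f X" "partially_differentiable p g X"
  shows "euler_sum p (\<lambda>Y. c * f Y + d * g Y) X = c * euler_sum p f X + d * euler_sum p g X"
proof -
  have "deriv (\<lambda>t. c * f (X(i := t)) + d * g (X(i := t))) (X i)
      = c * deriv (\<lambda>t. f (X(i := t))) (X i) + d * deriv (\<lambda>t. g (X(i := t))) (X i)"
    if "i < p" for i
    using assms that unfolding partially_differentiable_def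
    by (intro DERIV_imp_deriv DERIV_add DERIV_cmult)
       (auto simp: DERIV_deriv_iff_real_differentiable)
  then show ?thesis
    unfolding euler_sum_def
    by (simp add: algebra_simps sum.distrib sum_distrib_left)
qed

lemma euler_sum_eq_0_if_partials_vanish:
  assumes "\<forall>i<p. ((\<lambda>t. f (X(i := t))) has_real_derivative 0) (at (X i))"
  shows "euler_sum p f X = 0"
  using assms unfolding euler_sum_def by (auto intro!: sum.neutral simp: DERIV_imp_deriv)

lemma has_real_derivative_update_diff:
  assumes "(g has_real_derivative g') (at (X a - X b))"
  shows "((\<lambda>t. g ((X(i := t)) a - (X(i := t)) b)) has_real_derivative
           g' * (of_bool (a = i) - of_bool (b = i))) (at (X i))"
proof (rule DERIV_chain2[where f = g])
  show "((\<lambda>t. (X(i := t)) a - (X(i := t)) b) has_real_derivative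
          of_bool (a = i) - of_bool (b = i)) (at (X i))"
    by (cases "a = i"; cases "b = i") (auto intro!: derivative_eq_intros)
qed (use assms in auto)

lemma euler_sum_difference_sum:
  fixes g :: "'k \<Rightarrow> real \<Rightarrow> real" and g' :: "'k \<Rightarrow> real" and a b :: "'k \<Rightarrow> nat"
  assumes "finite K"
    and index: "\<And>k. k \<in> K \<Longrightarrow> a k < p \<and> b k < p"
    and deriv: "\<And>k. k \<in> K \<Longrightarrow> (g k has_real_derivative g' k) (at (X (a k) - X (b k)))"
    and homogeneous: "\<And>k. k \<in> K \<Longrightarrow> (X (a k) - X (b k)) * g' k = r * g k (X (a k) - X (b k))"
  defines "f \<equiv> \<lambda>Y. \<Sum>k\<in>K. g k (Y (a k) - Y (b k))"
  shows "partially_differentiable p f X" and "euler_sum p f X = r * f X"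
proof -
  define D where "D i = (\<Sum>k\<in>K. g' k * (of_bool (a k = i) - of_bool (b k = i)))" for i
  have D: "((\<lambda>t. f (X(i := t))) has_real_derivative D i) (at (X i))" for i
    unfolding f_def D_def
    by (intro DERIV_sum has_real_derivative_update_diff deriv)
  then show "partially_differentiable p f X"
    unfolding partially_differentiable_def by (auto simp: real_differentiable_def)
  have "euler_sum p f X = (\<Sum>i<p. X i * D i)"
    unfolding euler_sum_def using DERIV_imp_deriv[OF D] by simp
  also have "\<dots> = (\<Sum>k\<in>K. g' k * (\<Sum>i<p. X i * (of_bool (a k = i) - of_bool (b k = i))))"
    unfolding D_def sum_distrib_left by (subst sum.swap) (simp add: algebra_simps)
  also have "\<dots> = (\<Sum>k\<in>K. (X (a k) - X (b k)) * g' k)"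
    using index by (intro sum.cong) (simp_all add: algebra_simps sum_subtractf)
  also have "\<dots> = r * f X"
    unfolding f_def using homogeneous by (simp add: sum_distrib_left)
  finally show "euler_sum p f X = r * f X" .
qed

definition off_diagonal :: "nat \<Rightarrow> (nat \<times> nat) set" where
  "off_diagonal p = {(a, b). a < p \<and> b < p \<and> a \<noteq> b}"

lemma finite_off_diagonal [simp]: "finite (off_diagonal p)"
  by (rule finite_subset[of _ "{..<p} \<times> {..<p}"]) (auto simp: off_diagonal_def)

lemma pair_sum_off_diagonal:
  "pair_sum m p X = (\<Sum>k\<in>off_diagonal p. \<bar>X (fst k) - X (snd k)\<bar> powr (1 - m))"
proof -
  have "pair_sum m p X
      = (\<Sum>k\<in>{..<p} \<times> {..<p}. if fst k \<noteq> snd k then \<bar>X (fst k) - X (snd k)\<bar> powr (1 - m) else 0)"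
    unfolding pair_sum_def by (simp add: sum.cartesian_product case_prod_beta)
  also have "\<dots> = (\<Sum>k\<in>off_diagonal p. if fst k \<noteq> snd k then \<bar>X (fst k) - X (snd k)\<bar> powr (1 - m) else 0)"
    by (intro sum.mono_neutral_right) (auto simp: off_diagonal_def)
  also have "\<dots> = (\<Sum>k\<in>off_diagonal p. \<bar>X (fst k) - X (snd k)\<bar> powr (1 - m))"
    by (intro sum.cong) (auto simp: off_diagonal_def)
  finally show ?thesis .
qed

lemma
  assumes "region p X"
  shows partially_differentiable_consec_sum: "partially_differentiable p (consec_sum m p) X"
    and euler_sum_consec_sum: "euler_sum p (consec_sum m p) X = (1 - m) * consec_sum m p X"
proof -
  define g' where "g' k = (1 - m) * (X (k + 1) - X k) powr (1 - m - 1)" for k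
  have gap: "X (k + 1) - X k > 0" if "k \<in> {..<p - 1}" for k
    using region_consecutive_less[OF assms] that by auto
  have index: "k + 1 < p \<and> k < p" if "k \<in> {..<p - 1}" for k
    using that by auto
  have deriv: "((\<lambda>u. u powr (1 - m)) has_real_derivative g' k) (at (X (k + 1) - X k))"
    if "k \<in> {..<p - 1}" for k
    unfolding g'_def using has_real_derivative_powr[OF gap[OF that]] .
  have homogeneous: "(X (k + 1) - X k) * g' k = (1 - m) * (X (k + 1) - X k) powr (1 - m)"
    if "k \<in> {..<p - 1}" for k
    unfolding g'_def using powr_euler_relation[OF gap[OF that]] .
  have "consec_sum m p = (\<lambda>Y. \<Sum>k\<in>{..<p - 1}. (Y (k + 1) - Y k) powr (1 - m))"
    by (simp add: fun_eq_iff consec_sum_def)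
  with euler_sum_difference_sum[where X = X and a = "\<lambda>k. k + 1" and b = "\<lambda>k. k",
      OF finite_lessThan index deriv homogeneous]
  show "partially_differentiable p (consec_sum m p) X"
    and "euler_sum p (consec_sum m p) X = (1 - m) * consec_sum m p X"
    by simp_all
qed

lemma
  assumes "region p X"
  shows partially_differentiable_pair_sum: "partially_differentiable p (pair_sum m p) X"
    and euler_sum_pair_sum: "euler_sum p (pair_sum m p) X = (1 - m) * pair_sum m p X"
proof -
  define g' where "g' k = (1 - m) * \<bar>X (fst k) - X (snd k)\<bar> powr (1 - m) / (X (fst k) - X (snd k))"
    for k
  have index: "fst k < p \<and> snd k < p" if "k \<in> off_diagonal p" for k
    using that by (auto simp: off_diagonal_def)
  have nonzero: "X (fst k) - X (snd k) \<noteq> 0" if "k \<in> off_diagonal p" for k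
    using region_inj[OF assms] that by (auto simp: off_diagonal_def)
  have deriv: "((\<lambda>u. \<bar>u\<bar> powr (1 - m)) has_real_derivative g' k) (at (X (fst k) - X (snd k)))"
    if "k \<in> off_diagonal p" for k
    unfolding g'_def using has_real_derivative_abs_powr[OF nonzero[OF that]] .
  have homogeneous:
    "(X (fst k) - X (snd k)) * g' k = (1 - m) * \<bar>X (fst k) - X (snd k)\<bar> powr (1 - m)"
    if "k \<in> off_diagonal p" for k
    unfolding g'_def using nonzero[OF that] by simp
  have "pair_sum m p = (\<lambda>Y. \<Sum>k\<in>off_diagonal p. \<bar>Y (fst k) - Y (snd k)\<bar> powr (1 - m))"
    by (simp add: fun_eq_iff pair_sum_off_diagonal)
  with euler_sum_difference_sum[where X = X and a = fst and b = snd,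
      OF finite_off_diagonal index deriv homogeneous]
  show "partially_differentiable p (pair_sum m p) X"
    and "euler_sum p (pair_sum m p) X = (1 - m) * pair_sum m p X"
    by simp_all
qed

lemma
  shows partially_differentiable_sqnorm: "partially_differentiable p (sqnorm p) X"
    and euler_sum_sqnorm: "euler_sum p (sqnorm p) X = 2 * sqnorm p X"
proof -
  have D: "((\<lambda>t. sqnorm p (X(i := t))) has_real_derivative 2 * X i) (at (X i))" if "i < p" for i
  proof -
    have "((\<lambda>t. ((X(i := t)) k)\<^sup>2) has_real_derivative 2 * X k * of_bool (k = i)) (at (X i))" for k
      by (cases "k = i") (auto intro!: derivative_eq_intros)
    then have "((\<lambda>t. \<Sum>k<p. ((X(i := t)) k)\<^sup>2) has_real_derivative
        (\<Sum>k<p. 2 * X k * of_bool (k = i))) (at (X i))"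
      by (intro DERIV_sum)
    then show ?thesis
      using that by (simp add: sqnorm_def)
  qed
  then show "partially_differentiable p (sqnorm p) X"
    unfolding partially_differentiable_def by (auto simp: real_differentiable_def)
  have "euler_sum p (sqnorm p) X = (\<Sum>i<p. X i * (2 * X i))"
    unfolding euler_sum_def using DERIV_imp_deriv[OF D] by simp
  then show "euler_sum p (sqnorm p) X = 2 * sqnorm p X"
    by (simp add: sqnorm_def sum_distrib_left power2_eq_square algebra_simps)
qed

lemma consec_sum_pos:
  assumes "region p X" "p \<ge> 2"
  shows "consec_sum m p X > 0"
  unfolding consec_sum_def
proof (rule sum_pos)
  have "0 \<in> {..<p - 1}"
    using assms(2) by simp
  then show "{..<p - 1} \<noteq> {}"
    by blast
  show "0 < (X (k + 1) - X k) powr (1 - m)" if "k \<in> {..<p - 1}" for k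
  proof -
    have "k + 1 < p"
      using that by auto
    then show ?thesis
      using region_consecutive_less[OF assms(1), of k] by simp
  qed
qed simp

lemma pair_sum_pos:
  assumes "region p X" "p \<ge> 2"
  shows "pair_sum m p X > 0"
  unfolding pair_sum_off_diagonal
proof (rule sum_pos)
  have "(0, 1) \<in> off_diagonal p"
    using assms(2) by (simp add: off_diagonal_def)
  then show "off_diagonal p \<noteq> {}"
    by blast
  show "0 < \<bar>X (fst k) - X (snd k)\<bar> powr (1 - m)" if "k \<in> off_diagonal p" for k
    using region_inj[OF assms(1)] that by (auto simp: off_diagonal_def)
qed simp

lemma sqnorm_pos:
  assumes "region p X" "p \<ge> 2"
  shows "sqnorm p X > 0"
proof -
  have "X 0 < X 1"
    using region_consecutive_less[OF assms(1), of 0] assms(2) by simp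
  then obtain j where "j < p" "X j \<noteq> 0"
    using assms(2) by (cases "X 0 = 0") (auto intro: that[of 0] that[of 1])
  then show ?thesis
    unfolding sqnorm_def by (intro sum_pos2[of _ j]) auto
qed

text \<open>Each interaction term is dominated by the gap between the smaller of its two
indices and its successor.\<close>

lemma pair_term_le_consec_sum:
  assumes "region p X" "m > 1" "(a, b) \<in> off_diagonal p"
  shows "\<bar>X a - X b\<bar> powr (1 - m) \<le> consec_sum m p X"
proof -
  define k where "k = min a b"
  define l where "l = max a b"
  have kl: "k < l" "l < p"
    using assms(3) unfolding k_def l_def off_diagonal_def by auto
  have "X (k + 1) \<le> X l"
    using region_strict_mono[OF assms(1), of "k + 1" l] kl by (cases "k + 1 = l") auto
  moreover have "\<bar>X a - X b\<bar> = X l - X k"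
    using region_strict_mono[OF assms(1), of a b] region_strict_mono[OF assms(1), of b a] kl
    unfolding k_def l_def by (cases "a < b") auto
  moreover have "X (k + 1) - X k > 0"
    using region_consecutive_less[OF assms(1), of k] kl by simp
  ultimately have "\<bar>X a - X b\<bar> powr (1 - m) \<le> (X (k + 1) - X k) powr (1 - m)"
    using assms(2) by (intro powr_mono2') auto
  also have "\<dots> \<le> consec_sum m p X"
    unfolding consec_sum_def
    by (rule member_le_sum[where f = "\<lambda>k. (X (k + 1) - X k) powr (1 - m)"]) (use kl in auto)
  finally show ?thesis .
qed

lemma pair_sum_le_card_mult_consec_sum:
  assumes "region p X" "m > 1"
  shows "pair_sum m p X \<le> real (card (off_diagonal p)) * consec_sum m p X"
  unfolding pair_sum_off_diagonal
  using pair_term_le_consec_sum[OF assms] by (intro sum_bounded_above) auto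

lemma Cp_mult_pair_sum_le_consec_sum:
  assumes "region p X" "m > 1" "p \<ge> 2"
  shows "Cp m p * pair_sum m p X \<le> consec_sum m p X"
proof -
  define s where "s = (SUP Y\<in>{Y. region p Y}. pair_sum m p Y / consec_sum m p Y)"
  have "bdd_above ((\<lambda>Y. pair_sum m p Y / consec_sum m p Y) ` {Y. region p Y})"
  proof (rule bdd_aboveI2)
    fix Y assume "Y \<in> {Y. region p Y}"
    then show "pair_sum m p Y / consec_sum m p Y \<le> real (card (off_diagonal p))"
      using pair_sum_le_card_mult_consec_sum[of p Y m] consec_sum_pos[of p Y m] assms(2,3)
      by (simp add: divide_le_eq)
  qed
  then have ratio: "pair_sum m p X / consec_sum m p X \<le> s"
    unfolding s_def by (rule cSUP_upper[rotated]) (use assms(1) in simp)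
  have pos: "pair_sum m p X > 0" "consec_sum m p X > 0"
    using pair_sum_pos consec_sum_pos assms(1,3) by blast+
  then have "s > 0"
    using ratio by (smt (verit) divide_pos_pos)
  moreover have "pair_sum m p X \<le> s * consec_sum m p X"
    using ratio pos by (simp add: divide_le_eq)
  ultimately show ?thesis
    unfolding Cp_def s_def[symmetric] by (simp add: field_simps)
qed

lemma critical_consec_sum_pair_sum_eq:
  assumes crit: "critical m chi alpha p V" and "m > 1"
  shows "consec_sum m p V - chi * pair_sum m p V = alpha * sqnorm p V"
proof -
  have reg: "region p V"
    using crit unfolding critical_def by simp
  let ?interaction = "\<lambda>Y. 1 / (m - 1) * consec_sum m p Y + (- chi / (m - 1)) * pair_sum m p Y"
  have F: "Fma m chi alpha p = (\<lambda>Y. 1 * ?interaction Y + alpha / 2 * sqnorm p Y)"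
    by (simp add: fun_eq_iff Fma_def)
  have pd: "partially_differentiable p ?interaction V"
    by (intro partially_differentiable_lincomb partially_differentiable_consec_sum
        partially_differentiable_pair_sum reg)
  have "0 = euler_sum p (Fma m chi alpha p) V"
    using crit unfolding critical_def by (simp add: euler_sum_eq_0_if_partials_vanish)
  also have "\<dots> = 1 * euler_sum p ?interaction V + alpha / 2 * euler_sum p (sqnorm p) V"
    unfolding F by (rule euler_sum_lincomb[OF pd partially_differentiable_sqnorm])
  also have "euler_sum p ?interaction V
      = 1 / (m - 1) * euler_sum p (consec_sum m p) V + (- chi / (m - 1)) * euler_sum p (pair_sum m p) V"
    by (rule euler_sum_lincomb[OF partially_differentiable_consec_sum[OF reg]
          partially_differentiable_pair_sum[OF reg]])
  also have "1 * (1 / (m - 1) * euler_sum p (consec_sum m p) V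
      + (- chi / (m - 1)) * euler_sum p (pair_sum m p) V) + alpha / 2 * euler_sum p (sqnorm p) V
      = 1 / (m - 1) * ((1 - m) * consec_sum m p V)
      + (- chi / (m - 1)) * ((1 - m) * pair_sum m p V) + alpha / 2 * (2 * sqnorm p V)"
    by (simp only: euler_sum_consec_sum[OF reg] euler_sum_pair_sum[OF reg] euler_sum_sqnorm mult_1)
  also have "\<dots> = - (consec_sum m p V - chi * pair_sum m p V) + alpha * sqnorm p V"
  proof -
    have "c / (m - 1) * ((1 - m) * x) = - (c * x)" for c x
      using \<open>m > 1\<close> by (simp add: field_simps)
    from this[of 1] this[of "- chi"] show ?thesis
      by simp
  qed
  finally show ?thesis
    by simp
qed

lemma critical_Cp_gap_le:
  assumes crit: "critical m chi alpha p V" and "m > 1" "p \<ge> 2"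
  shows "(Cp m p - chi) * pair_sum m p V \<le> alpha * sqnorm p V"
proof -
  have "region p V"
    using crit unfolding critical_def by simp
  then have "Cp m p * pair_sum m p V \<le> consec_sum m p V"
    using Cp_mult_pair_sum_le_consec_sum assms(2,3) by blast
  with critical_consec_sum_pair_sum_eq[OF crit \<open>m > 1\<close>] show ?thesis
    by (simp add: algebra_simps)
qed

lemma critical_Fma_0_eq:
  assumes crit: "critical m chi alpha p V" and "m > 1"
  shows "Fma m chi 0 p V = alpha * (sqnorm p V / (m - 1))"
proof -
  have "Fma m chi 0 p V = (consec_sum m p V - chi * pair_sum m p V) / (m - 1)"
    unfolding Fma_def by (simp add: diff_divide_distrib)
  with critical_consec_sum_pair_sum_eq[OF assms] show ?thesis
    by simp
qed

theorem proposition2p4: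
  fixes m chi alpha :: real and p :: nat
  assumes "m > 1" and "chi > 0" and "p \<ge> 2"
  shows "(chi < Cp m p \<longrightarrow> alpha \<le> 0 \<longrightarrow> \<not> (\<exists>V. critical m chi alpha p V))
       \<and> (chi = Cp m p \<longrightarrow> alpha < 0 \<longrightarrow> \<not> (\<exists>V. critical m chi alpha p V))
       \<and> (chi > Cp m p \<longrightarrow> (\<forall>V. critical m chi alpha p V \<longrightarrow>
             Fma m chi 0 p V = 2 / (m - 1) * alpha * (sqnorm p V / 2)
           \<and> sgn (Fma m chi 0 p V) = sgn alpha))"
proof -
  have positive: "pair_sum m p V > 0" "sqnorm p V > 0" if "critical m chi alpha p V" for V
    using that pair_sum_pos sqnorm_pos assms(3) unfolding critical_def by blast+
  note gap = critical_Cp_gap_le[OF _ assms(1,3)]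
  show ?thesis
  proof (intro conjI impI allI notI)
    assume "chi < Cp m p" "alpha \<le> 0" "\<exists>V. critical m chi alpha p V"
    then obtain V where crit: "critical m chi alpha p V"
      by blast
    have "(Cp m p - chi) * pair_sum m p V > 0"
      using \<open>chi < Cp m p\<close> positive(1)[OF crit] by simp
    moreover have "alpha * sqnorm p V \<le> 0"
      using \<open>alpha \<le> 0\<close> positive(2)[OF crit] by (simp add: mult_nonpos_nonneg)
    ultimately show False
      using gap[OF crit] by linarith
  next
    assume "chi = Cp m p" "alpha < 0" "\<exists>V. critical m chi alpha p V"
    then obtain V where crit: "critical m chi alpha p V"
      by blast
    have "alpha * sqnorm p V < 0"
      using \<open>alpha < 0\<close> positive(2)[OF crit] by (simp add: mult_neg_pos)
    then show False
      using gap[OF crit] \<open>chi = Cp m p\<close> by simp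
  next
    fix V
    assume crit: "critical m chi alpha p V"
    note Fma = critical_Fma_0_eq[OF crit assms(1)]
    then show "Fma m chi 0 p V = 2 / (m - 1) * alpha * (sqnorm p V / 2)"
      using assms(1) by (simp add: field_simps)
    have "sqnorm p V / (m - 1) > 0"
      using positive(2)[OF crit] assms(1) by simp
    then show "sgn (Fma m chi 0 p V) = sgn alpha"
      unfolding Fma sgn_mult by (simp only: sgn_pos mult_1_right)
  qed
qed

end
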